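(* Let $X$ be a Polish space with a complete metric and a countable basis $\mathcal O$, and let $I$ be a $\sigma$-ideal on $X$. Then the ideal $J_I$ is weakly selective: for every $J_I$-positive set $a\subseteq\mathcal O$ and every function $f:a\to\omega$, there is a $J_I$-positive $b\subseteq a$ such that $f\restriction b$ is constant or injective.
   Context: For $a\subseteq\mathcal O$, $\mathrm{cl}(a)=\{x\in X:\forall\varepsilon>0\ \exists O\in a\ O\subseteq B_\varepsilon(x)\}$, where $B_\varepsilon(x)$ is the open ball of radius $\varepsilon$ around $x$. $J_I=\{a\subseteq\mathcal O:\mathrm{cl}(a)\in I\}$; $a$ is $J_I$-positive if $a\notin J_I$. *)

theory Defs
  imports "HOL-Analysis.Analysis"
begin

definition sigma_ideal :: "'a set set \<Rightarrow> bool" where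
  "sigma_ideal I \<longleftrightarrow>
     (\<forall>A\<in>I. \<forall>B. B \<subseteq> A \<longrightarrow> B \<in> I) \<and>
     (\<forall>F. countable F \<and> F \<subseteq> I \<longrightarrow> \<Union>F \<in> I)"

definition cl :: "'a::metric_space set set \<Rightarrow> 'a set" where
  "cl a = {x. \<forall>e>0. \<exists>U\<in>a. U \<subseteq> ball x e}"

definition J_ideal :: "'a::metric_space set set \<Rightarrow> 'a set set \<Rightarrow> 'a set set set" where
  "J_ideal Ob I = {a. a \<subseteq> Ob \<and> cl a \<in> I}"

definition J_positive :: "'a::metric_space set set \<Rightarrow> 'a set set \<Rightarrow> 'a set set \<Rightarrow> bool" where
  "J_positive Ob I a \<longleftrightarrow> a \<subseteq> Ob \<and> a \<notin> J_ideal Ob I"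

end

theory Submission
  imports Defs
begin

(* Let a be J_I-positive and f : a -> nat, and split a into
   the fibres a_n = {U in a. f U = n}.  If some cl(a_n) is I-positive, the fibre a_n is
   the required set on which f is constant.  Otherwise, since I is a sigma-ideal, the set
   Y = cl(a) - (UN n. cl(a_n)) is I-positive.  At a point y of Y every open neighbourhood
   V contains members of a carrying infinitely many f-values (a finite set of values
   would let us shrink a ball around y below all members of the finitely many fibres).
   Enumerating the countably many basic sets V with this property and choosing in the
   k-th of them a member of a whose f-value exceeds the previously chosen ones yields
   b contained in a with f injective on b and every basic neighbourhood of a point of Y
   containing a member of b, i.e. Y is contained in cl(b); so b is J_I-positive. *)

lemma sigma_ideal_subset:
  assumes "sigma_ideal I" and "A \<in> I" and "B \<subseteq> A"
  shows "B \<in> I"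
  using assms unfolding sigma_ideal_def by blast

lemma sigma_ideal_diff_countable_Union:
  assumes I: "sigma_ideal I" and A: "A \<notin> I" and C: "\<And>n::nat. C n \<in> I"
  shows "A - (\<Union>n. C n) \<notin> I"
proof
  assume null: "A - (\<Union>n. C n) \<in> I"
  have "countable (insert (A - (\<Union>n. C n)) (range C))" by simp
  moreover have "insert (A - (\<Union>n. C n)) (range C) \<subseteq> I" using null C by blast
  ultimately have "\<Union>(insert (A - (\<Union>n. C n)) (range C)) \<in> I"
    using I unfolding sigma_ideal_def by blast
  moreover have "A \<subseteq> \<Union>(insert (A - (\<Union>n. C n)) (range C))" by blast
  ultimately show False using A sigma_ideal_subset[OF I] by blast
qed

lemma in_cl_if_basic_neighbourhoods:
  fixes y :: "'a::metric_space"
  assumes B: "topological_basis Ob"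
    and nbhd: "\<And>W. W \<in> Ob \<Longrightarrow> y \<in> W \<Longrightarrow> \<exists>U\<in>b. U \<subseteq> W"
  shows "y \<in> cl b"
  unfolding cl_def
proof (intro CollectI allI impI)
  fix e :: real
  assume "e > 0"
  then have "y \<in> ball y e" by simp
  then obtain W where W: "W \<in> Ob" "y \<in> W" "W \<subseteq> ball y e"
    by (rule topological_basisE[OF B open_ball])
  then obtain U where "U \<in> b" "U \<subseteq> W" using nbhd by blast
  then show "\<exists>U\<in>b. U \<subseteq> ball y e" using W(3) by blast
qed

lemma infinite_values_near_point:
  fixes y :: "'a::metric_space" and f :: "'a set \<Rightarrow> nat"
  assumes y_cl: "y \<in> cl a" and y_fibres: "\<And>n. y \<notin> cl {U\<in>a. f U = n}"
    and V: "open V" "y \<in> V"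
  shows "infinite (f ` {U\<in>a. U \<subseteq> V})"
proof
  assume fin: "finite (f ` {U\<in>a. U \<subseteq> V})" (is "finite ?F")
  obtain r where r: "r > 0" "ball y r \<subseteq> V"
    using V open_contains_ball by blast
  have "\<exists>e>0. \<forall>U\<in>a. f U = n \<longrightarrow> \<not> U \<subseteq> ball y e" for n
    using y_fibres[of n] unfolding cl_def by blast
  then obtain e where e_pos: "\<And>n. e n > 0"
    and e_avoid: "\<And>n U. U \<in> a \<Longrightarrow> f U = n \<Longrightarrow> \<not> U \<subseteq> ball y (e n)"
    by metis
  define d where "d = Min (insert r (e ` ?F))"
  have "d > 0" using fin r e_pos by (auto simp: d_def)
  then obtain U where U: "U \<in> a" "U \<subseteq> ball y d"
    using y_cl unfolding cl_def by blast
  have "d \<le> r" using fin by (simp add: d_def)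
  then have "U \<subseteq> V" using U r by (meson order.trans subset_ball)
  then have "f U \<in> ?F" using U by blast
  then have "d \<le> e (f U)" using fin by (simp add: d_def)
  then have "U \<subseteq> ball y (e (f U))" using U(2) by (meson order.trans subset_ball)
  then show False using e_avoid U(1) by blast
qed

lemma strict_mono_choice:
  fixes T :: "nat \<Rightarrow> nat set"
  assumes inf: "\<And>k. infinite (T k)"
  shows "\<exists>m. strict_mono m \<and> (\<forall>k. m k \<in> T k)"
proof -
  have above: "\<exists>n. n \<in> T k \<and> n > p" for k p
    using inf[of k] unfolding infinite_nat_iff_unbounded by blast
  define m where "m = rec_nat (SOME n. n \<in> T 0) (\<lambda>k p. SOME n. n \<in> T (Suc k) \<and> n > p)"
  have m0: "m 0 \<in> T 0"
    unfolding m_def using above[of 0 0] by (simp, metis someI)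
  have mSuc: "m (Suc k) \<in> T (Suc k) \<and> m (Suc k) > m k" for k
    using someI_ex[OF above[of "Suc k" "m k"]] by (simp add: m_def)
  have "m k \<in> T k" for k using m0 mSuc by (cases k) auto
  moreover have "strict_mono m" using mSuc by (simp add: strict_mono_Suc_iff)
  ultimately show ?thesis by blast
qed

lemma injective_selection:
  fixes f :: "'b set \<Rightarrow> nat"
  assumes K: "countable K"
    and inf: "\<And>V. V \<in> K \<Longrightarrow> infinite (f ` {U\<in>a. U \<subseteq> V})"
  shows "\<exists>b\<subseteq>a. inj_on f b \<and> (\<forall>V\<in>K. \<exists>U\<in>b. U \<subseteq> V)"
proof (cases "K = {}")
  case True
  then show ?thesis by auto
next
  case False
  define V where "V = from_nat_into K"
  have V_range: "range V = K" using K False by (simp add: V_def range_from_nat_into)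
  obtain m where m: "strict_mono m" "\<And>k. m k \<in> f ` {U\<in>a. U \<subseteq> V k}"
    using strict_mono_choice[of "\<lambda>k. f ` {U\<in>a. U \<subseteq> V k}"] inf V_range by blast
  then obtain Us where Us: "\<And>k. Us k \<in> a \<and> Us k \<subseteq> V k \<and> f (Us k) = m k"
    by (simp add: image_iff) metis
  have "inj_on f (range Us)"
  proof (rule inj_onI)
    fix x z
    assume "x \<in> range Us" "z \<in> range Us" "f x = f z"
    then obtain i j where "x = Us i" "z = Us j" "m i = m j" using Us by auto
    then show "x = z" using m(1) strict_mono_eq by metis
  qed
  moreover have "\<forall>W\<in>K. \<exists>U\<in>range Us. U \<subseteq> W" using Us V_range by blast
  ultimately show ?thesis using Us by blast
qed

lemma injective_refinement:
  fixes Ob :: "'a::metric_space set set" and f :: "'a set \<Rightarrow> nat"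
  assumes cOb: "countable Ob" and B: "topological_basis Ob"
  shows "\<exists>b\<subseteq>a. inj_on f b \<and> cl a - (\<Union>n. cl {U\<in>a. f U = n}) \<subseteq> cl b"
proof -
  define Y where "Y = cl a - (\<Union>n. cl {U\<in>a. f U = n})"
  define K where "K = {V\<in>Ob. infinite (f ` {U\<in>a. U \<subseteq> V})}"
  have basic_in_K: "W \<in> K" if y: "y \<in> Y" and W: "W \<in> Ob" "y \<in> W" for y W
  proof -
    have "open W" using topological_basis_open[OF B W(1)] .
    then have "infinite (f ` {U\<in>a. U \<subseteq> W})"
      using y W(2) infinite_values_near_point[of y a f W] unfolding Y_def by blast
    then show ?thesis using W(1) unfolding K_def by blast
  qed
  have "countable K" using cOb by (auto simp: K_def intro: countable_subset)
  moreover have "\<And>V. V \<in> K \<Longrightarrow> infinite (f ` {U\<in>a. U \<subseteq> V})"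
    unfolding K_def by blast
  ultimately obtain b where b: "b \<subseteq> a" "inj_on f b" "\<forall>V\<in>K. \<exists>U\<in>b. U \<subseteq> V"
    using injective_selection[of K f a] by blast
  have "y \<in> cl b" if "y \<in> Y" for y
  proof (rule in_cl_if_basic_neighbourhoods[OF B])
    fix W assume "W \<in> Ob" "y \<in> W"
    then show "\<exists>U\<in>b. U \<subseteq> W" using basic_in_K[OF \<open>y \<in> Y\<close>] b(3) by blast
  qed
  then have "Y \<subseteq> cl b" by blast
  then show ?thesis using b unfolding Y_def by blast
qed

theorem proposition4p2:
  fixes Ob :: "'a::polish_space set set" and I :: "'a set set"
  assumes "countable Ob" and "topological_basis Ob"
    and "sigma_ideal I"
  shows "\<forall>a (f :: 'a set \<Rightarrow> nat). J_positive Ob I a \<longrightarrow>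
           (\<exists>b. b \<subseteq> a \<and> J_positive Ob I b \<and>
                ((\<exists>n. \<forall>U\<in>b. f U = n) \<or> inj_on f b))"
proof (intro allI impI)
  fix a and f :: "'a set \<Rightarrow> nat"
  assume "J_positive Ob I a"
  then have a_Ob: "a \<subseteq> Ob" and a_pos: "cl a \<notin> I"
    by (auto simp: J_positive_def J_ideal_def)
  have positive: "J_positive Ob I b" if "b \<subseteq> a" "cl b \<notin> I" for b
    using that a_Ob by (auto simp: J_positive_def J_ideal_def)
  show "\<exists>b. b \<subseteq> a \<and> J_positive Ob I b \<and> ((\<exists>n. \<forall>U\<in>b. f U = n) \<or> inj_on f b)"
  proof (cases "\<exists>n. cl {U\<in>a. f U = n} \<notin> I")
    case True
    then obtain n where n: "cl {U\<in>a. f U = n} \<notin> I" by blast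
    define b where "b = {U\<in>a. f U = n}"
    have "b \<subseteq> a" and "\<forall>U\<in>b. f U = n" by (auto simp: b_def)
    moreover have "J_positive Ob I b" using positive[OF \<open>b \<subseteq> a\<close>] n by (simp add: b_def)
    ultimately show ?thesis by (intro exI[of _ b]) simp
  next
    case False
    then have "\<And>n. cl {U\<in>a. f U = n} \<in> I" by blast
    then have Y_pos: "cl a - (\<Union>n. cl {U\<in>a. f U = n}) \<notin> I"
      by (rule sigma_ideal_diff_countable_Union[OF assms(3) a_pos])
    obtain b where b: "b \<subseteq> a" "inj_on f b" "cl a - (\<Union>n. cl {U\<in>a. f U = n}) \<subseteq> cl b"
      using injective_refinement[OF assms(1,2)] by blast
    have "cl b \<notin> I"
      using Y_pos sigma_ideal_subset[OF assms(3) _ b(3)] by blast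
    then have "J_positive Ob I b" by (rule positive[OF b(1)])
    with b(1,2) show ?thesis by (intro exI[of _ b]) simp
  qed
qed

end
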